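(* Let $m,n\ge0$ be integers and $\lambda$ a bipartition. Then $\lambda$ is almost $(m|n)$-cross if and only if its weight diagram $x_\lambda(m-n)$ has the following form: - every vertex $j\le -m-1$ is labelled $\wedge$; - every vertex $j\ge n+2$ is labelled $\vee$; - the $m+n+2$ vertices $-m,-m+1,\dots,n+1$ carry exactly $m+1$ labels $\times$ and $n+1$ labels $\bigcirc$, in some order.
   Context: A partition is a weakly decreasing sequence $\alpha=(\alpha_1,\alpha_2,\dots)$ of nonnegative integers, almost all zero. A bipartition is a pair $\lambda=(\lambda^\bullet,\lambda^\circ)$ of partitions. Containment is componentwise. A bipartition $\lambda$ is $(m|n)$-cross if there exists $k$ with $0\le k\le m$ such that $\lambda^\bullet_{k+1}+\lambda^\circ_{m-k+1}\le n$. It is almost $(m|n)$-cross if it is not $(m|n)$-cross but every bipartition strictly contained in it is $(m|n)$-cross. Set $I_\wedge(\lambda)=\{\lambda^\bullet_i-(i-1):i\ge1\}$ and $I_\vee(\lambda,\delta)=\{i-\delta-\lambda^\circ_i:i\ge1\}$. The weight diagram $x_\lambda(\delta)$ labels each integer $j$ by: - $\bigcirc$ if $j$ is in neither set; - $\wedge$ if $j$ is only in $I_\wedge(\lambda)$; - $\vee$ if $j$ is only in $I_\vee(\lambda,\delta)$; - $\times$ if $j$ is in both. *)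

theory Defs
  imports Main
begin

text \<open>Partitions are encoded 0-based: a function a :: nat => nat with a i
  standing for the paper's alpha_(i+1).\<close>

definition is_partition :: "(nat \<Rightarrow> nat) \<Rightarrow> bool" where
  "is_partition a \<longleftrightarrow> (\<forall>i. a (Suc i) \<le> a i) \<and> finite {i. a i \<noteq> 0}"

type_synonym bipartition = "(nat \<Rightarrow> nat) \<times> (nat \<Rightarrow> nat)"

definition is_bipartition :: "bipartition \<Rightarrow> bool" where
  "is_bipartition l \<longleftrightarrow> is_partition (fst l) \<and> is_partition (snd l)"

definition bp_contained :: "bipartition \<Rightarrow> bipartition \<Rightarrow> bool" where
  "bp_contained mu l \<longleftrightarrow> (\<forall>i. fst mu i \<le> fst l i \<and> snd mu i \<le> snd l i)"

text \<open>(m|n)-cross: exists k with 0 <= k <= m, lambda^bullet_(k+1) + lambda^circ_(m-k+1) <= n.\<close>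
definition is_cross :: "nat \<Rightarrow> nat \<Rightarrow> bipartition \<Rightarrow> bool" where
  "is_cross m n l \<longleftrightarrow> (\<exists>k\<le>m. fst l k + snd l (m - k) \<le> n)"

definition almost_cross :: "nat \<Rightarrow> nat \<Rightarrow> bipartition \<Rightarrow> bool" where
  "almost_cross m n l \<longleftrightarrow> \<not> is_cross m n l \<and>
     (\<forall>mu. is_bipartition mu \<and> bp_contained mu l \<and> mu \<noteq> l \<longrightarrow> is_cross m n mu)"

text \<open>I_wedge = { lambda^bullet_i - (i-1) : i >= 1 }, 0-based: { a i - i : i >= 0 }.\<close>
definition I_wedge :: "bipartition \<Rightarrow> int set" where
  "I_wedge l = {int (fst l i) - int i | i. True}"

text \<open>I_vee = { i - delta - lambda^circ_i : i >= 1 }, 0-based: { (i+1) - delta - b i }.\<close>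
definition I_vee :: "bipartition \<Rightarrow> int \<Rightarrow> int set" where
  "I_vee l d = {int i + 1 - d - int (snd l i) | i. True}"

datatype wlabel = Circ | Up | Down | Cross

definition weight_diagram :: "bipartition \<Rightarrow> int \<Rightarrow> int \<Rightarrow> wlabel" where
  "weight_diagram l d j =
     (if j \<in> I_wedge l \<and> j \<in> I_vee l d then Cross
      else if j \<in> I_wedge l then Up
      else if j \<in> I_vee l d then Down
      else Circ)"

end

theory Submission
  imports Defs
begin

text \<open>
  Shrinking a corner row k of a (or, by the symmetry that
  exchanges a and b and replaces k by m - k, of b) can only make k a witness for crossness,
  so in an almost cross bipartition every corner row k satisfies a k + b (m - k) = n + 1.
  Every nonzero row ends in a block of equal rows whose last row is a corner; this forces
  all rows beyond m to vanish and all these m + 1 sums to equal n + 1. Conversely such a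
  bipartition is almost cross, since removing any box breaks one of the equalities.

  On the weight diagram side, the labels outside the window [-m, n + 1] are as prescribed
  exactly when both partitions fit in the (m + 1) \<times> (n + 1) box. Then I_wedge and I_vee
  each meet the window in m + 1 points, and the counts of crosses and circles are m + 1
  and n + 1 exactly when these two sets coincide. Both are enumerated monotonically by the
  rows, so they coincide iff the rows pair up as above.
\<close>

lemma partition_antimono: "is_partition a \<Longrightarrow> i \<le> j \<Longrightarrow> a j \<le> a i"
  unfolding is_partition_def by (metis lift_Suc_antimono_le)

lemma partition_passes_level:
  assumes "is_partition a" and "0 < c" and "c \<le> a i"
  obtains p where "i \<le> p" and "c \<le> a p" and "a (Suc p) < c"
proof -
  let ?S = "{p. c \<le> a p}"
  have "?S \<subseteq> {i. a i \<noteq> 0}" using \<open>0 < c\<close> by auto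
  then have "finite ?S" using assms(1) finite_subset unfolding is_partition_def by blast
  moreover have "i \<in> ?S" using assms(3) by simp
  ultimately have "i \<le> Max ?S" "Max ?S \<in> ?S" "Suc (Max ?S) \<notin> ?S"
    using Max_ge Max_in[of ?S] Max_ge[of ?S "Suc (Max ?S)"] by fastforce+
  then show thesis using that by auto
qed

lemma is_partition_remove_corner:
  assumes "is_partition a" and "a (Suc k) < a k"
  shows "is_partition (a(k := a k - 1))"
  unfolding is_partition_def
proof
  show "\<forall>i. (a(k := a k - 1)) (Suc i) \<le> (a(k := a k - 1)) i"
  proof
    fix i
    have "a (Suc i) \<le> a i" using assms(1) unfolding is_partition_def by blast
    then show "(a(k := a k - 1)) (Suc i) \<le> (a(k := a k - 1)) i"
      using assms(2) by (cases "Suc i = k"; cases "i = k") auto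
  qed
  have "{i. (a(k := a k - 1)) i \<noteq> 0} \<subseteq> {i. a i \<noteq> 0}" by auto
  then show "finite {i. (a(k := a k - 1)) i \<noteq> 0}"
    using assms(1) finite_subset unfolding is_partition_def by blast
qed

lemma card_Int_eq_iff_eq:
  assumes "finite A" and "finite B" and "card A = card B"
  shows "card (A \<inter> B) = card A \<longleftrightarrow> A = B"
proof
  assume "card (A \<inter> B) = card A"
  then have "A \<inter> B = A" using card_subset_eq[OF assms(1), of "A \<inter> B"] by blast
  then have "A \<subseteq> B" by blast
  then show "A = B" using card_subset_eq[OF assms(2), of A] assms(3) by simp
qed simp

lemma card_Un_eq_iff_eq:
  assumes "finite A" and "finite B" and "card A = card B"
  shows "card (A \<union> B) = card A \<longleftrightarrow> A = B"
proof
  assume "card (A \<union> B) = card A"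
  then have "A = A \<union> B" using card_subset_eq[of "A \<union> B" A] assms(1,2) by simp
  then have "B \<subseteq> A" by blast
  then show "A = B" using card_subset_eq[OF assms(1), of B] assms(3) by simp
qed simp

lemma strict_mono_on_atMost_eq_if_image_eq:
  fixes f g :: "nat \<Rightarrow> 'a :: linorder"
  assumes "strict_mono_on {..m} f" and "strict_mono_on {..m} g" and "f ` {..m} = g ` {..m}"
    and "i \<le> m"
  shows "f i = g i"
proof -
  have sorted: "sorted_wrt (<) (map h [0..<Suc m])" if "strict_mono_on {..m} h" for h :: "nat \<Rightarrow> 'a"
    unfolding sorted_wrt_map
    by (rule sorted_wrt_mono_rel[OF _ sorted_wrt_upt]) (use that in \<open>auto intro: strict_mono_onD\<close>)
  have "set (map h [0..<Suc m]) = h ` {..m}" for h :: "nat \<Rightarrow> 'a"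
    by (simp only: set_map set_upt atLeast0LessThan lessThan_Suc_atMost)
  then have "map f [0..<Suc m] = map g [0..<Suc m]"
    using strict_sorted_equal[OF sorted sorted] assms(1-3) by simp
  then show ?thesis using assms(4) by (simp only: map_eq_conv set_upt) auto
qed

lemma is_cross_swap: "is_cross m n (prod.swap l) \<longleftrightarrow> is_cross m n l"
  unfolding is_cross_def by (metis add.commute diff_diff_cancel diff_le_self fst_swap snd_swap)

lemma almost_cross_imp_almost_cross_swap:
  assumes "almost_cross m n l"
  shows "almost_cross m n (prod.swap l)"
  unfolding almost_cross_def
proof (intro conjI allI impI)
  show "\<not> is_cross m n (prod.swap l)" using assms is_cross_swap unfolding almost_cross_def by blast
  fix mu assume mu: "is_bipartition mu \<and> bp_contained mu (prod.swap l) \<and> mu \<noteq> prod.swap l"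
  then have "is_bipartition (prod.swap mu) \<and> bp_contained (prod.swap mu) l \<and> prod.swap mu \<noteq> l"
    unfolding is_bipartition_def bp_contained_def by auto
  then show "is_cross m n mu" using assms is_cross_swap unfolding almost_cross_def by metis
qed

lemma almost_cross_swap: "almost_cross m n (prod.swap l) \<longleftrightarrow> almost_cross m n l"
  using almost_cross_imp_almost_cross_swap[of m n l]
    almost_cross_imp_almost_cross_swap[of m n "prod.swap l"]
  by auto

lemma almost_cross_fst_corner:
  assumes pa: "is_partition a" and pb: "is_partition b" and ac: "almost_cross m n (a, b)"
    and corner: "a (Suc k) < a k"
  shows "k \<le> m \<and> a k + b (m - k) = n + 1"
proof -
  define a' where "a' = a(k := a k - 1)"
  have "is_bipartition (a', b)"
    using is_partition_remove_corner[OF pa corner] pb unfolding is_bipartition_def a'_def by simp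
  moreover have "bp_contained (a', b) (a, b)" unfolding bp_contained_def a'_def by auto
  moreover have "a' k \<noteq> a k" using corner unfolding a'_def by simp
  then have "(a', b) \<noteq> (a, b)" by auto
  ultimately have "is_cross m n (a', b)" using ac unfolding almost_cross_def by blast
  then obtain k' where k': "k' \<le> m" "a' k' + b (m - k') \<le> n" unfolding is_cross_def by auto
  have not_cross: "n < a i + b (m - i)" if "i \<le> m" for i
    using ac that unfolding almost_cross_def is_cross_def by force
  have "k' = k" using not_cross[OF k'(1)] k'(2) unfolding a'_def by (cases "k' = k") auto
  then show ?thesis using k' not_cross[of k] unfolding a'_def by auto
qed

lemma almost_cross_snd_corner:
  assumes "is_partition a" and "is_partition b" and "almost_cross m n (a, b)"
    and "b (Suc k) < b k"
  shows "k \<le> m \<and> b k + a (m - k) = n + 1"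
  using almost_cross_fst_corner[of b a m n k] almost_cross_swap[of m n "(a, b)"] assms by simp

text \<open>The Young diagram of \<open>a\<close> and that of \<open>b\<close> turned by 180 degrees tile the
  (m + 1) \<times> (n + 1) rectangle.\<close>
definition complementary :: "nat \<Rightarrow> nat \<Rightarrow> (nat \<Rightarrow> nat) \<Rightarrow> (nat \<Rightarrow> nat) \<Rightarrow> bool" where
  "complementary m n a b \<longleftrightarrow>
     (\<forall>i>m. a i = 0 \<and> b i = 0) \<and> (\<forall>k\<le>m. a k + b (m - k) = n + 1)"

lemma almost_cross_imp_complementary:
  assumes pa: "is_partition a" and pb: "is_partition b" and ac: "almost_cross m n (a, b)"
  shows "complementary m n a b"
proof -
  have not_cross: "n < a k + b (m - k)" if "k \<le> m" for k
    using ac that unfolding almost_cross_def is_cross_def by force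
  have vanish_a: "a i = 0" if "m < i" for i
  proof (rule ccontr)
    assume "a i \<noteq> 0"
    then obtain p where "i \<le> p" "a i \<le> a p" "a (Suc p) < a i"
      using partition_passes_level[OF pa, of "a i" i] by auto
    then show False using almost_cross_fst_corner[OF pa pb ac, of p] that by simp
  qed
  have vanish_b: "b i = 0" if "m < i" for i
  proof (rule ccontr)
    assume "b i \<noteq> 0"
    then obtain p where "i \<le> p" "b i \<le> b p" "b (Suc p) < b i"
      using partition_passes_level[OF pb, of "b i" i] by auto
    then show False using almost_cross_snd_corner[OF pa pb ac, of p] that by simp
  qed
  \<comment> \<open>Pass to the last row of the block of rows equal to \<open>b (m - k)\<close> (or \<open>a k\<close>): it is a
    corner, hence in a tight pair, and that pair dominates the pair of k.\<close>
  have "a k + b (m - k) \<le> n + 1" if k: "k \<le> m" for k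
  proof (cases "b (m - k) = 0")
    case False
    then obtain q where q: "m - k \<le> q" "b (m - k) \<le> b q" "b (Suc q) < b (m - k)"
      using partition_passes_level[OF pb, of "b (m - k)" "m - k"] by auto
    then have "b q = b (m - k)" using partition_antimono[OF pb q(1)] by simp
    then have "q \<le> m" "b (m - k) + a (m - q) = n + 1"
      using almost_cross_snd_corner[OF pa pb ac, of q] q(3) by simp_all
    moreover have "a k \<le> a (m - q)" using partition_antimono[OF pa] q(1) k by simp
    ultimately show ?thesis by simp
  next
    case True
    show ?thesis
    proof (cases "a k = 0")
      case False
      then obtain p where p: "k \<le> p" "a k \<le> a p" "a (Suc p) < a k"
        using partition_passes_level[OF pa, of "a k" k] by auto
      then have "a p = a k" using partition_antimono[OF pa p(1)] by simp
      then show ?thesis using almost_cross_fst_corner[OF pa pb ac, of p] p(3) True by simp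
    qed (use True in simp)
  qed
  then show ?thesis
    unfolding complementary_def using not_cross vanish_a vanish_b by (simp add: le_antisym Suc_le_eq)
qed

lemma complementary_imp_almost_cross:
  assumes comp: "complementary m n a b"
  shows "almost_cross m n (a, b)"
  unfolding almost_cross_def
proof (intro conjI allI impI)
  show "\<not> is_cross m n (a, b)" using comp unfolding complementary_def is_cross_def by auto
  fix mu assume mu: "is_bipartition mu \<and> bp_contained mu (a, b) \<and> mu \<noteq> (a, b)"
  obtain c e where mu_eq: "mu = (c, e)" by fastforce
  have le: "c i \<le> a i" "e i \<le> b i" for i using mu mu_eq unfolding bp_contained_def by auto
  obtain i where "c i < a i \<or> e i < b i"
    using mu mu_eq le by (metis le_neq_implies_less ext)
  then show "is_cross m n mu"
  proof
    assume less: "c i < a i"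
    then have "i \<le> m" using comp unfolding complementary_def by (metis not_less_zero not_le)
    then have "c i + e (m - i) \<le> n" using less le[of "m - i"] comp unfolding complementary_def by fastforce
    then show ?thesis using \<open>i \<le> m\<close> mu_eq unfolding is_cross_def by auto
  next
    assume less: "e i < b i"
    then have "i \<le> m" using comp unfolding complementary_def by (metis not_less_zero not_le)
    then have "a (m - i) + b i = n + 1"
      using comp unfolding complementary_def by (metis diff_diff_cancel diff_le_self)
    then have "c (m - i) + e (m - (m - i)) \<le> n"
      using less le(1)[of "m - i"] \<open>i \<le> m\<close> by simp
    then show ?thesis unfolding is_cross_def mu_eq by (metis diff_le_self fst_conv snd_conv)
  qed
qed

lemma almost_cross_iff_complementary:
  "is_partition a \<Longrightarrow> is_partition b \<Longrightarrow>
    almost_cross m n (a, b) \<longleftrightarrow> complementary m n a b"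
  using almost_cross_imp_complementary complementary_imp_almost_cross by blast

definition fits_box :: "nat \<Rightarrow> nat \<Rightarrow> (nat \<Rightarrow> nat) \<Rightarrow> bool" where
  "fits_box m n a \<longleftrightarrow> (\<forall>i>m. a i = 0) \<and> (\<forall>i. a i \<le> n + 1)"

lemma complementary_imp_fits_box:
  assumes "complementary m n a b"
  shows "fits_box m n a" and "fits_box m n b"
proof -
  have "a i \<le> n + 1 \<and> b i \<le> n + 1" for i
  proof (cases "i \<le> m")
    case True
    then have "a i + b (m - i) = n + 1" "a (m - i) + b i = n + 1"
      using assms unfolding complementary_def by (simp, metis diff_diff_cancel diff_le_self)
    then show ?thesis by simp
  qed (use assms in \<open>simp add: complementary_def\<close>)
  then show "fits_box m n a" "fits_box m n b"
    using assms unfolding complementary_def fits_box_def by auto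
qed

definition wedge_pos :: "(nat \<Rightarrow> nat) \<Rightarrow> nat \<Rightarrow> int" where
  "wedge_pos a i = int (a i) - int i"

definition vee_pos :: "int \<Rightarrow> (nat \<Rightarrow> nat) \<Rightarrow> nat \<Rightarrow> int" where
  "vee_pos d b i = int i + 1 - d - int (b i)"

lemma I_wedge_eq: "I_wedge (a, b) = range (wedge_pos a)"
  unfolding I_wedge_def wedge_pos_def by auto

lemma I_vee_eq: "I_vee (a, b) d = range (vee_pos d b)"
  unfolding I_vee_def vee_pos_def by auto

lemma weight_diagram_eq_iff:
  "weight_diagram l d j = Cross \<longleftrightarrow> j \<in> I_wedge l \<and> j \<in> I_vee l d"
  "weight_diagram l d j = Up \<longleftrightarrow> j \<in> I_wedge l \<and> j \<notin> I_vee l d"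
  "weight_diagram l d j = Down \<longleftrightarrow> j \<notin> I_wedge l \<and> j \<in> I_vee l d"
  "weight_diagram l d j = Circ \<longleftrightarrow> j \<notin> I_wedge l \<and> j \<notin> I_vee l d"
  by (auto simp: weight_diagram_def)

lemma wedge_pos_strict_antimono: "is_partition a \<Longrightarrow> i < j \<Longrightarrow> wedge_pos a j < wedge_pos a i"
  using partition_antimono[of a i j] unfolding wedge_pos_def by simp

lemma vee_pos_strict_mono:
  assumes "is_partition b"
  shows "strict_mono (vee_pos d b)"
proof (rule strict_monoI)
  fix i j :: nat
  assume "i < j"
  then show "vee_pos d b i < vee_pos d b j"
    using partition_antimono[OF assms, of i j] unfolding vee_pos_def by simp
qed

lemma range_wedge_pos_Int_window:
  assumes "fits_box m n a"
  shows "range (wedge_pos a) \<inter> {- int m .. int n + 1} = wedge_pos a ` {..m}"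
proof -
  have "p \<le> m" if "wedge_pos a p \<ge> - int m" for p
    using assms that unfolding fits_box_def wedge_pos_def by (cases "p \<le> m") auto
  moreover have "wedge_pos a p \<in> {- int m .. int n + 1}" if "p \<le> m" for p
  proof -
    have "a p \<le> n + 1" using assms unfolding fits_box_def by blast
    then show ?thesis using that unfolding wedge_pos_def by simp
  qed
  ultimately show ?thesis by auto
qed

lemma range_vee_pos_Int_window:
  assumes "fits_box m n b"
  shows "range (vee_pos (int m - int n) b) \<inter> {- int m .. int n + 1} = vee_pos (int m - int n) b ` {..m}"
proof -
  have "p \<le> m" if "vee_pos (int m - int n) b p \<le> int n + 1" for p
    using assms that unfolding fits_box_def vee_pos_def by (cases "p \<le> m") auto
  moreover have "vee_pos (int m - int n) b p \<in> {- int m .. int n + 1}" if "p \<le> m" for p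
  proof -
    have "b p \<le> n + 1" using assms unfolding fits_box_def by blast
    then show ?thesis using that unfolding vee_pos_def by simp
  qed
  ultimately show ?thesis by auto
qed

lemma outer_labels_if_fits_box:
  assumes "fits_box m n a" and "fits_box m n b"
  shows "j \<le> - int m - 1 \<Longrightarrow> weight_diagram (a, b) (int m - int n) j = Up"
    and "int n + 2 \<le> j \<Longrightarrow> weight_diagram (a, b) (int m - int n) j = Down"
proof -
  have wedge_high: "wedge_pos a p \<le> int n + 1" for p
  proof -
    have "a p \<le> n + 1" using assms(1) unfolding fits_box_def by blast
    then show ?thesis unfolding wedge_pos_def by simp
  qed
  have vee_low: "- int m \<le> vee_pos (int m - int n) b p" for p
  proof -
    have "b p \<le> n + 1" using assms(2) unfolding fits_box_def by blast
    then show ?thesis unfolding vee_pos_def by simp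
  qed
  show "weight_diagram (a, b) (int m - int n) j = Up" if "j \<le> - int m - 1"
  proof -
    have "wedge_pos a (nat (- j)) = j" using assms(1) that unfolding fits_box_def wedge_pos_def by simp
    then have "j \<in> range (wedge_pos a)" by (metis rangeI)
    moreover have "j \<noteq> vee_pos (int m - int n) b p" for p using vee_low[of p] that by simp
    ultimately show ?thesis by (auto simp: weight_diagram_eq_iff I_wedge_eq I_vee_eq)
  qed
  show "weight_diagram (a, b) (int m - int n) j = Down" if "int n + 2 \<le> j"
  proof -
    have "vee_pos (int m - int n) b (nat (j - 1 + int m - int n)) = j"
      using assms(2) that unfolding fits_box_def vee_pos_def by simp
    then have "j \<in> range (vee_pos (int m - int n) b)" by (metis rangeI)
    moreover have "j \<noteq> wedge_pos a p" for p using wedge_high[of p] that by simp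
    ultimately show ?thesis by (auto simp: weight_diagram_eq_iff I_wedge_eq I_vee_eq)
  qed
qed

lemma fits_box_if_wedge_range:
  assumes pa: "is_partition a"
    and low: "\<And>j. j \<le> - int m - 1 \<Longrightarrow> j \<in> range (wedge_pos a)"
    and high: "\<And>j. int n + 2 \<le> j \<Longrightarrow> j \<notin> range (wedge_pos a)"
  shows "fits_box m n a"
  unfolding fits_box_def
proof (intro conjI allI impI)
  fix i
  have "wedge_pos a 0 < int n + 2" using high[of "wedge_pos a 0"] by (metis rangeI not_le)
  then show "a i \<le> n + 1" using partition_antimono[OF pa, of 0 i] unfolding wedge_pos_def by simp
next
  fix i assume "m < i"
  show "a i = 0"
  proof (rule ccontr)
    assume "a i \<noteq> 0"
    then obtain p where p: "i \<le> p" "1 \<le> a p" "a (Suc p) < 1"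
      using partition_passes_level[OF pa, of 1 i] by auto
    \<comment> \<open>The last nonzero row p makes the decreasing sequence \<open>wedge_pos a\<close> skip -p.\<close>
    obtain q where q: "wedge_pos a q = - int p" using low[of "- int p"] \<open>m < i\<close> p(1) by force
    show False
    proof (cases "q \<le> p")
      case True
      then show False using q p(2) partition_antimono[OF pa True] unfolding wedge_pos_def by simp
    next
      case False
      then have "a q = 0" using p(3) partition_antimono[OF pa, of "Suc p" q] by simp
      then show False using q False unfolding wedge_pos_def by simp
    qed
  qed
qed

lemma fits_box_if_vee_range:
  assumes pb: "is_partition b"
    and low: "\<And>j. j \<le> - int m - 1 \<Longrightarrow> j \<notin> range (vee_pos (int m - int n) b)"
    and high: "\<And>j. int n + 2 \<le> j \<Longrightarrow> j \<in> range (vee_pos (int m - int n) b)"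
  shows "fits_box m n b"
  unfolding fits_box_def
proof (intro conjI allI impI)
  fix i
  have "- int m - 1 < vee_pos (int m - int n) b 0"
    using low[of "vee_pos (int m - int n) b 0"] by (metis rangeI not_le)
  then show "b i \<le> n + 1" using partition_antimono[OF pb, of 0 i] unfolding vee_pos_def by simp
next
  fix i assume "m < i"
  show "b i = 0"
  proof (rule ccontr)
    assume "b i \<noteq> 0"
    then obtain p where p: "i \<le> p" "1 \<le> b p" "b (Suc p) < 1"
      using partition_passes_level[OF pb, of 1 i] by auto
    obtain q where q: "vee_pos (int m - int n) b q = int p + 1 - (int m - int n)"
      using high[of "int p + 1 - (int m - int n)"] \<open>m < i\<close> p(1) by force
    show False
    proof (cases "q \<le> p")
      case True
      then show False using q p(2) partition_antimono[OF pb True] unfolding vee_pos_def by simp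
    next
      case False
      then have "b q = 0" using p(3) partition_antimono[OF pb, of "Suc p" q] by simp
      then show False using q False unfolding vee_pos_def by simp
    qed
  qed
qed

lemma outer_labels_iff_fits_box:
  assumes pa: "is_partition a" and pb: "is_partition b"
  shows "(\<forall>j \<le> - int m - 1. weight_diagram (a, b) (int m - int n) j = Up) \<and>
           (\<forall>j \<ge> int n + 2. weight_diagram (a, b) (int m - int n) j = Down)
         \<longleftrightarrow> fits_box m n a \<and> fits_box m n b"
proof
  assume "(\<forall>j \<le> - int m - 1. weight_diagram (a, b) (int m - int n) j = Up) \<and>
          (\<forall>j \<ge> int n + 2. weight_diagram (a, b) (int m - int n) j = Down)"
  then show "fits_box m n a \<and> fits_box m n b"
    using fits_box_if_wedge_range[OF pa] fits_box_if_vee_range[OF pb]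
    by (simp add: weight_diagram_eq_iff I_wedge_eq I_vee_eq)
qed (use outer_labels_if_fits_box in blast)

lemma window_label_counts_iff:
  assumes pa: "is_partition a" and pb: "is_partition b"
    and fa: "fits_box m n a" and fb: "fits_box m n b"
  defines "A \<equiv> wedge_pos a ` {..m}" and "B \<equiv> vee_pos (int m - int n) b ` {..m}"
  shows "card {j \<in> {- int m .. int n + 1}. weight_diagram (a, b) (int m - int n) j = Cross} = m + 1
           \<longleftrightarrow> A = B"
    and "card {j \<in> {- int m .. int n + 1}. weight_diagram (a, b) (int m - int n) j = Circ} = n + 1
           \<longleftrightarrow> A = B"
proof -
  let ?W = "{- int m .. int n + 1}"
  have wedges: "range (wedge_pos a) \<inter> ?W = A"
    using range_wedge_pos_Int_window[OF fa] unfolding A_def .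
  have vees: "range (vee_pos (int m - int n) b) \<inter> ?W = B"
    using range_vee_pos_Int_window[OF fb] unfolding B_def .
  have "inj (wedge_pos a)"
    by (rule injI) (metis wedge_pos_strict_antimono[OF pa] linorder_neqE_nat less_irrefl)
  then have card_A: "card A = m + 1" unfolding A_def by (simp add: card_image inj_on_subset)
  have "inj (vee_pos (int m - int n) b)" using vee_pos_strict_mono[OF pb] strict_mono_imp_inj_on by blast
  then have card_B: "card B = m + 1" unfolding B_def by (simp add: card_image inj_on_subset)
  have fin: "finite A" "finite B" unfolding A_def B_def by simp_all
  have "{j \<in> ?W. weight_diagram (a, b) (int m - int n) j = Cross} = A \<inter> B"
    using wedges vees by (auto simp: weight_diagram_eq_iff I_wedge_eq I_vee_eq)
  then show "card {j \<in> ?W. weight_diagram (a, b) (int m - int n) j = Cross} = m + 1 \<longleftrightarrow> A = B"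
    using card_Int_eq_iff_eq[OF fin] card_A card_B by simp
  have circ: "{j \<in> ?W. weight_diagram (a, b) (int m - int n) j = Circ} = ?W - (A \<union> B)"
    using wedges vees by (auto simp: weight_diagram_eq_iff I_wedge_eq I_vee_eq)
  have "A \<union> B \<subseteq> ?W" using wedges vees by blast
  then have "card (?W - (A \<union> B)) = m + n + 2 - card (A \<union> B)" and "card (A \<union> B) \<le> m + n + 2"
    using card_Diff_subset[of "A \<union> B" ?W] card_mono[of ?W "A \<union> B"] fin by simp_all
  then show "card {j \<in> ?W. weight_diagram (a, b) (int m - int n) j = Circ} = n + 1 \<longleftrightarrow> A = B"
    unfolding circ using card_Un_eq_iff_eq[OF fin] card_A card_B by auto
qed

lemma complementary_iff_positions:
  assumes pa: "is_partition a" and pb: "is_partition b"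
    and fa: "fits_box m n a" and fb: "fits_box m n b"
  shows "complementary m n a b \<longleftrightarrow> wedge_pos a ` {..m} = vee_pos (int m - int n) b ` {..m}"
proof -
  have pos_eq: "wedge_pos a (m - i) = vee_pos (int m - int n) b i \<longleftrightarrow> a (m - i) + b i = n + 1"
    if "i \<le> m" for i
    using that unfolding wedge_pos_def vee_pos_def by linarith
  have "(\<forall>k\<le>m. a k + b (m - k) = n + 1) \<longleftrightarrow> (\<forall>i\<le>m. a (m - i) + b i = n + 1)"
    by (metis diff_diff_cancel diff_le_self)
  then have "complementary m n a b \<longleftrightarrow> (\<forall>i\<le>m. wedge_pos a (m - i) = vee_pos (int m - int n) b i)"
    using fa fb pos_eq unfolding complementary_def fits_box_def by simp
  also have "\<dots> \<longleftrightarrow> (\<lambda>i. wedge_pos a (m - i)) ` {..m} = vee_pos (int m - int n) b ` {..m}"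
  proof
    assume "(\<lambda>i. wedge_pos a (m - i)) ` {..m} = vee_pos (int m - int n) b ` {..m}"
    moreover have "strict_mono_on {..m} (\<lambda>i. wedge_pos a (m - i))"
      by (rule strict_mono_onI) (simp add: wedge_pos_strict_antimono[OF pa])
    moreover have "strict_mono_on {..m} (vee_pos (int m - int n) b)"
      using vee_pos_strict_mono[OF pb] unfolding strict_mono_def strict_mono_on_def by blast
    ultimately show "\<forall>i\<le>m. wedge_pos a (m - i) = vee_pos (int m - int n) b i"
      using strict_mono_on_atMost_eq_if_image_eq by blast
  qed (auto intro: image_cong)
  also have "(\<lambda>i. wedge_pos a (m - i)) ` {..m} = wedge_pos a ` {..m}"
  proof -
    have "(\<lambda>i. m - i) ` {..m} = {..m}"
    proof (intro equalityI subsetI)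
      fix k assume "k \<in> {..m}"
      then show "k \<in> (\<lambda>i. m - i) ` {..m}" by (intro image_eqI[where x = "m - k"]) auto
    qed auto
    then show ?thesis by (metis image_image)
  qed
  finally show ?thesis .
qed

theorem proposition2p7:
  fixes m n :: nat and l :: bipartition
  assumes "is_bipartition l"
  shows "almost_cross m n l \<longleftrightarrow>
    ((\<forall>j::int. j \<le> - int m - 1 \<longrightarrow> weight_diagram l (int m - int n) j = Up) \<and>
     (\<forall>j::int. j \<ge> int n + 2 \<longrightarrow> weight_diagram l (int m - int n) j = Down) \<and>
     card {j \<in> {- int m .. int n + 1}. weight_diagram l (int m - int n) j = Cross} = m + 1 \<and>
     card {j \<in> {- int m .. int n + 1}. weight_diagram l (int m - int n) j = Circ} = n + 1)"
proof -
  obtain a b where l: "l = (a, b)" by fastforce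
  have pa: "is_partition a" and pb: "is_partition b"
    using assms unfolding l is_bipartition_def by simp_all
  show ?thesis
  proof (cases "fits_box m n a \<and> fits_box m n b")
    case True
    then have fa: "fits_box m n a" and fb: "fits_box m n b" by simp_all
    show ?thesis
      unfolding l almost_cross_iff_complementary[OF pa pb]
        complementary_iff_positions[OF pa pb fa fb] window_label_counts_iff[OF pa pb fa fb]
      using outer_labels_iff_fits_box[OF pa pb, where m = m and n = n] True by simp
  next
    case False
    then show ?thesis
      unfolding l almost_cross_iff_complementary[OF pa pb]
      using outer_labels_iff_fits_box[OF pa pb, where m = m and n = n] complementary_imp_fits_box by blast
  qed
qed

end
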